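(* Let $M_{inf}=\begin{bmatrix}1&0&0&1\\1&1&0&1\end{bmatrix}$. The polyomino class $Av_{\mathfrak{P}}(M_{inf})$ has an infinite $p$-basis.
   Context: A polyomino is a finite union of unit cells of $\mathbb{Z}\times\mathbb{Z}$ that is connected via edge adjacency, up to translation. It is identified with the binary matrix of its minimal bounding rectangle: placing it in the positive quarter plane touching both axes, entry $(i,j)$ is $1$ iff the unit square $[j-1,j]\times[i-1,i]$ is a cell (rows numbered from bottom to top; in displayed matrices the first written row is the top row). A matrix $M'$ is a submatrix of $M$ if it is obtained by deleting rows and/or columns; the pattern order on polyominoes is the submatrix order restricted to polyominoes. $Av_{\mathfrak{P}}(M)$ is the set of polyominoes not containing $M$ as a submatrix; it is a polyomino class (downward closed set). The $p$-basis of a polyomino class $\mathcal{C}$ is the set of polyominoes not in $\mathcal{C}$ that are minimal for the pattern order among polyominoes not in $\mathcal{C}$. *)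

theory Defs
  imports Main
begin

text \<open>Binary matrices are lists of rows; the first list element is the TOP row
  (as matrices are displayed).  Entry (i,j) = M ! i ! j.\<close>

type_synonym bmat = "bool list list"

definition nrows :: "bmat \<Rightarrow> nat" where
  "nrows M = length M"

definition ncols :: "bmat \<Rightarrow> nat" where
  "ncols M = (if M = [] then 0 else length (hd M))"

definition is_matrix :: "bmat \<Rightarrow> bool" where
  "is_matrix M \<longleftrightarrow> M \<noteq> [] \<and> ncols M > 0 \<and> (\<forall>r\<in>set M. length r = ncols M)"

definition submatrix :: "bmat \<Rightarrow> bmat \<Rightarrow> bool" where
  "submatrix M' M \<longleftrightarrow> (\<exists>R C. M' = map (\<lambda>row. nths row C) (nths M R))"

definition cells :: "bmat \<Rightarrow> (nat \<times> nat) set" where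
  "cells M = {(i, j). i < nrows M \<and> j < ncols M \<and> M ! i ! j}"

definition edge_adj :: "nat \<times> nat \<Rightarrow> nat \<times> nat \<Rightarrow> bool" where
  "edge_adj a b \<longleftrightarrow>
     (fst a = fst b \<and> (snd b = snd a + 1 \<or> snd a = snd b + 1)) \<or>
     (snd a = snd b \<and> (fst b = fst a + 1 \<or> fst a = fst b + 1))"

definition polyomino :: "bmat \<Rightarrow> bool" where
  "polyomino P \<longleftrightarrow> is_matrix P
     \<and> (\<forall>i < nrows P. \<exists>j < ncols P. P ! i ! j)
     \<and> (\<forall>j < ncols P. \<exists>i < nrows P. P ! i ! j)
     \<and> (\<forall>x\<in>cells P. \<forall>y\<in>cells P.
           (x, y) \<in> {(a, b). a \<in> cells P \<and> b \<in> cells P \<and> edge_adj a b}\<^sup>*)"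

definition Av_P :: "bmat \<Rightarrow> bmat set" where
  "Av_P M = {P. polyomino P \<and> \<not> submatrix M P}"

definition p_basis :: "bmat set \<Rightarrow> bmat set" where
  "p_basis C = {P. polyomino P \<and> P \<notin> C \<and>
      \<not> (\<exists>Q. polyomino Q \<and> Q \<notin> C \<and> submatrix Q P \<and> Q \<noteq> P)}"

definition M_inf :: bmat where
  "M_inf = [[True, False, False, True],
            [True, True,  False, True]]"

end

theory Submission
  imports Defs
begin

text \<open>For \<open>n \<ge> 3\<close> the polyomino \<open>staircase n\<close> consists of the full first column, a
  staircase of width two descending from the top right corner to the bottom row, and the
  cell \<open>(1, 1)\<close>.  It contains \<open>M_inf\<close>, but any occurrence must use its top two rows,
  the columns \<open>0, 1, n + 1\<close> and some column \<open>c\<close> strictly between \<open>1\<close> and \<open>n\<close>.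
  Deleting any other row or column cuts the staircase, and the part beyond the cut no longer
  touches the rest: the gaps separating them in the top two rows survive because columns
  \<open>1\<close> and \<open>c\<close> are kept.  So no proper submatrix is a polyomino containing \<open>M_inf\<close>,
  and the staircases form an infinite family of basis elements.\<close>

definition sample_matrix :: "(nat \<Rightarrow> nat \<Rightarrow> bool) \<Rightarrow> nat list \<Rightarrow> nat list \<Rightarrow> bmat" where
  "sample_matrix f rs cs = map (\<lambda>r. map (f r) cs) rs"

lemma submatrix_sample_matrix_iff:
  "submatrix M (sample_matrix f rs cs) \<longleftrightarrow>
     (\<exists>R C. M = sample_matrix f (nths rs R) (nths cs C))"
  by (simp add: submatrix_def sample_matrix_def nths_map comp_def)

lemma nrows_sample_matrix [simp]: "nrows (sample_matrix f rs cs) = length rs"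
  by (simp add: nrows_def sample_matrix_def)

lemma ncols_sample_matrix [simp]: "rs \<noteq> [] \<Longrightarrow> ncols (sample_matrix f rs cs) = length cs"
  by (cases rs) (auto simp: ncols_def sample_matrix_def)

lemma nth_sample_matrix [simp]:
  "i < length rs \<Longrightarrow> j < length cs \<Longrightarrow> sample_matrix f rs cs ! i ! j = f (rs ! i) (cs ! j)"
  by (simp add: sample_matrix_def)

lemma cells_sample_matrix:
  "rs \<noteq> [] \<Longrightarrow>
     cells (sample_matrix f rs cs) = {(i, j). i < length rs \<and> j < length cs \<and> f (rs ! i) (cs ! j)}"
  by (auto simp: cells_def)

lemma sorted_wrt_less_nths: "sorted_wrt (<) (xs :: 'a :: linorder list) \<Longrightarrow> sorted_wrt (<) (nths xs I)"
  by (simp add: strict_sorted_iff sorted_nths)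

lemma sorted_wrt_less_nth_less_iff:
  assumes "sorted_wrt (<) (xs :: 'a :: linorder list)" "i < length xs" "k < length xs"
  shows "xs ! i < xs ! k \<longleftrightarrow> i < k"
  using assms sorted_wrt_nth_less[of "(<)" xs] by (metis linorder_neqE_nat order_less_asym)

lemma sorted_wrt_less_nothing_between_neighbours:
  assumes "sorted_wrt (<) (xs :: 'a :: linorder list)" "j < length xs" "j' < length xs"
    and "j' = Suc j \<or> j = Suc j'" and "x \<in> set xs"
  shows "\<not> (min (xs ! j) (xs ! j') < x \<and> x < max (xs ! j) (xs ! j'))"
proof -
  obtain k where k: "k < length xs" "x = xs ! k" using \<open>x \<in> set xs\<close> by (auto simp: in_set_conv_nth)
  show ?thesis
    using assms(4) sorted_wrt_less_nth_less_iff[OF assms(1)] assms(2,3) k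
    by (auto simp: min_def max_def)
qed

lemma nths_upt_eq:
  assumes "sorted_wrt (<) ks" "\<forall>k\<in>set ks. k < m"
  shows "nths [0..<m] (set ks) = ks"
proof (rule strict_sorted_equal)
  show "sorted_wrt (<) (nths [0..<m] (set ks))" by (simp add: sorted_wrt_less_nths)
  show "set (nths [0..<m] (set ks)) = set ks"
    using assms(2) by (auto simp: set_nths) (metis add_0 nth_upt)
qed (use assms(1) in simp)

definition cell_graph :: "bmat \<Rightarrow> ((nat \<times> nat) \<times> (nat \<times> nat)) set" where
  "cell_graph P = {(a, b). a \<in> cells P \<and> b \<in> cells P \<and> edge_adj a b}"

lemma polyomino_iff_cell_graph:
  "polyomino P \<longleftrightarrow> is_matrix P
     \<and> (\<forall>i < nrows P. \<exists>j < ncols P. P ! i ! j)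
     \<and> (\<forall>j < ncols P. \<exists>i < nrows P. P ! i ! j)
     \<and> (\<forall>x\<in>cells P. \<forall>y\<in>cells P. (x, y) \<in> (cell_graph P)\<^sup>*)"
  unfolding polyomino_def cell_graph_def ..

lemma sym_cell_graph: "sym (cell_graph P)"
  by (auto simp: sym_def cell_graph_def edge_adj_def)

lemma cell_graph_rtrancl_stepI:
  "a \<in> cells P \<Longrightarrow> b \<in> cells P \<Longrightarrow> edge_adj a b \<Longrightarrow> (b, z) \<in> (cell_graph P)\<^sup>*
     \<Longrightarrow> (a, z) \<in> (cell_graph P)\<^sup>*"
  by (rule converse_rtrancl_into_rtrancl) (auto simp: cell_graph_def)

lemma cell_graph_connected_if_reaches:
  assumes "\<And>x. x \<in> cells P \<Longrightarrow> (x, z) \<in> (cell_graph P)\<^sup>*"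
  shows "\<forall>x\<in>cells P. \<forall>y\<in>cells P. (x, y) \<in> (cell_graph P)\<^sup>*"
  using assms sym_rtrancl[OF sym_cell_graph] by (meson rtrancl_trans symD)

lemma polyomino_cell_graph_leaves:
  assumes "polyomino P" "x \<in> cells P" "x \<in> S" "y \<in> cells P" "y \<notin> S"
  obtains a b where "(a, b) \<in> cell_graph P" "a \<in> S" "b \<notin> S"
proof -
  have "(x, y) \<in> (cell_graph P)\<^sup>*"
    using assms(1,2,4) unfolding polyomino_iff_cell_graph by blast
  then have "y \<in> S \<or> (\<exists>a b. (a, b) \<in> cell_graph P \<and> a \<in> S \<and> b \<notin> S)"
    using \<open>x \<in> S\<close> by (induction rule: rtrancl_induct) blast+
  with \<open>y \<notin> S\<close> that show ?thesis by blast
qed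

text \<open>Two cells of a sampled matrix are adjacent only if no sampled row or column lies
  strictly between their sample points, so the gap conditions forbid every edge leaving \<open>U\<close>.\<close>

lemma sample_matrix_not_polyomino:
  assumes rs: "sorted_wrt (<) rs" and cs: "sorted_wrt (<) cs"
    and row_gap: "\<And>r c c'. r \<in> set rs \<Longrightarrow> c \<in> set cs \<Longrightarrow> c' \<in> set cs \<Longrightarrow> f r c \<Longrightarrow> f r c'
        \<Longrightarrow> (r, c) \<in> U \<Longrightarrow> (r, c') \<notin> U \<Longrightarrow> \<exists>c''\<in>set cs. min c c' < c'' \<and> c'' < max c c'"
    and col_gap: "\<And>c r r'. c \<in> set cs \<Longrightarrow> r \<in> set rs \<Longrightarrow> r' \<in> set rs \<Longrightarrow> f r c \<Longrightarrow> f r' c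
        \<Longrightarrow> (r, c) \<in> U \<Longrightarrow> (r', c) \<notin> U \<Longrightarrow> \<exists>r''\<in>set rs. min r r' < r'' \<and> r'' < max r r'"
    and in_U: "r \<in> set rs" "c \<in> set cs" "f r c" "(r, c) \<in> U"
    and not_in_U: "r' \<in> set rs" "c' \<in> set cs" "f r' c'" "(r', c') \<notin> U"
  shows "\<not> polyomino (sample_matrix f rs cs)"
proof
  assume P: "polyomino (sample_matrix f rs cs)"
  have ne: "rs \<noteq> []" using in_U by auto
  note cells = cells_sample_matrix[OF ne]
  let ?S = "{(i, j). (rs ! i, cs ! j) \<in> U}"
  obtain i j where "i < length rs" "j < length cs" "rs ! i = r" "cs ! j = c"
    using in_U by (auto simp: in_set_conv_nth)
  with in_U have x: "(i, j) \<in> cells (sample_matrix f rs cs)" "(i, j) \<in> ?S" by (auto simp: cells)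
  obtain i' j' where "i' < length rs" "j' < length cs" "rs ! i' = r'" "cs ! j' = c'"
    using not_in_U by (auto simp: in_set_conv_nth)
  with not_in_U have y: "(i', j') \<in> cells (sample_matrix f rs cs)" "(i', j') \<notin> ?S" by (auto simp: cells)
  obtain a b where ab: "(a, b) \<in> cell_graph (sample_matrix f rs cs)" "a \<in> ?S" "b \<notin> ?S"
    using polyomino_cell_graph_leaves[OF P x(1,2) y] .
  obtain k l k' l' where a: "a = (k, l)" and b: "b = (k', l')" by fastforce
  have k: "k < length rs" "l < length cs" "f (rs ! k) (cs ! l)"
    and k': "k' < length rs" "l' < length cs" "f (rs ! k') (cs ! l')"
    and adj: "edge_adj (k, l) (k', l')"
    using ab(1) by (auto simp: cell_graph_def cells a b)
  show False
  proof (cases "k = k'")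
    case True
    with adj have "l' = Suc l \<or> l = Suc l'" by (auto simp: edge_adj_def)
    moreover obtain c'' where "c'' \<in> set cs" "min (cs ! l) (cs ! l') < c''" "c'' < max (cs ! l) (cs ! l')"
      using row_gap[of "rs ! k" "cs ! l" "cs ! l'"] k k' ab(2,3) True by (auto simp: a b)
    ultimately show False using sorted_wrt_less_nothing_between_neighbours[OF cs k(2) k'(2)] by blast
  next
    case False
    with adj have "l = l'" "k' = Suc k \<or> k = Suc k'" by (auto simp: edge_adj_def)
    moreover obtain r'' where "r'' \<in> set rs" "min (rs ! k) (rs ! k') < r''" "r'' < max (rs ! k) (rs ! k')"
      using col_gap[of "cs ! l" "rs ! k" "rs ! k'"] k k' ab(2,3) \<open>l = l'\<close> by (auto simp: a b)
    ultimately show False using sorted_wrt_less_nothing_between_neighbours[OF rs k(1) k'(1)] by blast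
  qed
qed

text \<open>For \<open>n = 3\<close>, with the top row first:
\<^verbatim>\<open>
    1 0 0 0 1
    1 1 0 1 1
    1 0 1 1 0
    1 1 1 0 0
\<close>\<close>

definition staircase_cell :: "nat \<Rightarrow> nat \<Rightarrow> nat \<Rightarrow> bool" where
  "staircase_cell n i j \<longleftrightarrow> j = 0 \<or> (i = 0 \<and> j = n + 1) \<or> (i = 1 \<and> j = 1)
     \<or> (1 \<le> i \<and> i \<le> n \<and> (i + j = n + 1 \<or> i + j = n + 2))"

definition staircase :: "nat \<Rightarrow> bmat" where
  "staircase n = sample_matrix (staircase_cell n) [0..<n + 1] [0..<n + 2]"

lemma cells_staircase:
  "cells (staircase n) = {(i, j). i \<le> n \<and> j \<le> n + 1 \<and> staircase_cell n i j}"
  unfolding staircase_def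
  by (subst cells_sample_matrix) (auto simp del: upt_Suc simp: less_Suc_eq_le)

lemma staircase_reaches_corner:
  assumes "1 \<le> n" "x \<in> cells (staircase n)"
  shows "(x, (0, 0)) \<in> (cell_graph (staircase n))\<^sup>*"
proof -
  let ?reaches = "\<lambda>x. (x, (0, 0)) \<in> (cell_graph (staircase n))\<^sup>*"
  note step = cell_graph_rtrancl_stepI[of _ "staircase n"]
  note simps = cells_staircase staircase_cell_def edge_adj_def
  have column: "?reaches (i, 0)" if "i \<le> n" for i
    using that
  proof (induction i)
    case (Suc i)
    show ?case by (rule step[OF _ _ _ Suc.IH]) (use Suc.prems in \<open>auto simp: simps\<close>)
  qed simp
  have stair: "?reaches (i, n + 1 - i) \<and> ?reaches (i, n + 2 - i)" if "1 \<le> i" "i \<le> n" for i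
  proof (induction rule: inc_induct[OF \<open>i \<le> n\<close>])
    case 1
    have "?reaches (n, 1)"
      by (rule step[OF _ _ _ column[of n]]) (use assms in \<open>auto simp: simps\<close>)
    moreover have "?reaches (n, 2)"
      by (rule step[OF _ _ _ \<open>?reaches (n, 1)\<close>]) (use assms in \<open>auto simp: simps\<close>)
    ultimately show ?case by (simp add: numeral_2_eq_2)
  next
    case (2 m)
    have "?reaches (m, n + 1 - m)"
      by (rule step[OF _ _ _ conjunct2[OF "2.IH"]]) (use 2 \<open>1 \<le> i\<close> in \<open>auto simp: simps\<close>)
    moreover have "?reaches (m, n + 2 - m)"
      by (rule step[OF _ _ _ \<open>?reaches (m, n + 1 - m)\<close>]) (use 2 \<open>1 \<le> i\<close> in \<open>auto simp: simps\<close>)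
    ultimately show ?case ..
  qed
  obtain i j where x: "x = (i, j)" "i \<le> n" "staircase_cell n i j"
    using assms(2) by (auto simp: cells_staircase)
  consider "j = 0" | "i = 0" "j = n + 1" | "i = 1" "j = 1"
    | "1 \<le> i" "i + j = n + 1 \<or> i + j = n + 2"
    using x(3) unfolding staircase_cell_def by blast
  then show ?thesis
  proof cases
    case 1
    then show ?thesis using column[OF x(2)] x(1) by simp
  next
    case 2
    have "?reaches (1, n + 1)" using stair[of 1] assms(1) by simp
    then show ?thesis by (rule step[rotated 3]) (use 2 assms(1) x in \<open>auto simp: simps\<close>)
  next
    case 3
    show ?thesis by (rule step[OF _ _ _ column[of 1]]) (use 3 assms(1) x in \<open>auto simp: simps\<close>)
  next
    case 4
    then have "j = n + 1 - i \<or> j = n + 2 - i" by auto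
    with stair[OF 4(1) x(2)] x(1) show ?thesis by auto
  qed
qed

lemma polyomino_staircase:
  assumes "1 \<le> n"
  shows "polyomino (staircase n)"
proof -
  have entry: "staircase n ! i ! j = staircase_cell n i j" if "i < n + 1" "j < n + 2" for i j
    using that unfolding staircase_def by (subst nth_sample_matrix) (simp_all del: upt_Suc)
  have size: "nrows (staircase n) = n + 1" "ncols (staircase n) = n + 2"
    unfolding staircase_def by (simp_all del: upt_Suc)
  have "is_matrix (staircase n)"
    unfolding is_matrix_def size by (auto simp: staircase_def sample_matrix_def simp del: upt_Suc)
  moreover have "\<forall>i < nrows (staircase n). \<exists>j < ncols (staircase n). staircase n ! i ! j"
    unfolding size using entry by (auto simp: staircase_cell_def)
  moreover have "\<exists>i < nrows (staircase n). staircase n ! i ! j" if "j < ncols (staircase n)" for j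
  proof -
    have "\<exists>i \<le> n. staircase_cell n i j"
      using that assms unfolding size staircase_cell_def
      by (cases "j = 0 \<or> j = n + 1"; cases "j = 1") (auto intro: exI[of _ "n + 1 - j"])
    then show ?thesis using that entry unfolding size by (auto simp: less_Suc_eq_le)
  qed
  ultimately show ?thesis
    unfolding polyomino_iff_cell_graph
    using cell_graph_connected_if_reaches staircase_reaches_corner[OF assms] by blast
qed

lemma submatrix_M_inf_staircase:
  assumes "3 \<le> n"
  shows "submatrix M_inf (staircase n)"
proof -
  have "nths [0..<n + 1] (set [0, 1]) = [0, 1]" "nths [0..<n + 2] (set [0, 1, 2, n + 1]) = [0, 1, 2, n + 1]"
    using assms by (intro nths_upt_eq; simp)+
  moreover have "M_inf = sample_matrix (staircase_cell n) [0, 1] [0, 1, 2, n + 1]"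
    using assms by (simp add: sample_matrix_def M_inf_def staircase_cell_def)
  ultimately show ?thesis unfolding staircase_def submatrix_sample_matrix_iff by metis
qed

lemma staircase_column_pair:
  assumes "3 \<le> n" "0 < c" "a < b" "staircase_cell n a c" "staircase_cell n b c"
  shows "(a = 0 \<and> b = 1 \<and> c = n + 1) \<or> (a = 1 \<and> b = n \<and> c = 1)
    \<or> (b = a + 1 \<and> a + c = n + 1 \<and> 2 \<le> c \<and> c \<le> n)"
  using assms unfolding staircase_cell_def by auto

lemma staircase_M_inf_pattern:
  assumes n: "3 \<le> n" and ord: "a < b" "c1 < c2" "c2 < c3" "c3 < c4"
    and f: "staircase_cell n a c1" "staircase_cell n b c1"
      "\<not> staircase_cell n a c2" "staircase_cell n b c2"
      "\<not> staircase_cell n a c3" "\<not> staircase_cell n b c3"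
      "staircase_cell n a c4" "staircase_cell n b c4"
  shows "a = 0 \<and> b = 1 \<and> c1 = 0 \<and> c2 = 1 \<and> c4 = n + 1 \<and> 2 \<le> c3 \<and> c3 < n"
proof -
  have "a = 0 \<and> b = 1 \<and> c4 = n + 1"
    using staircase_column_pair[OF n _ ord(1) f(7,8)] staircase_column_pair[OF n _ ord(1) f(1,2)]
      f(4) ord n unfolding staircase_cell_def by auto
  then show ?thesis
    using f(3-6) ord unfolding staircase_cell_def by auto
qed

context
  fixes n :: nat and rs cs :: "nat list"
  assumes n: "3 \<le> n"
    and rs: "sorted_wrt (<) rs" "set rs \<subseteq> {..n}"
    and cs: "sorted_wrt (<) cs" "set cs \<subseteq> {..n + 1}"
begin

lemma staircase_M_inf_occurrence:
  assumes "submatrix M_inf (sample_matrix (staircase_cell n) rs cs)"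
  obtains c where "0 \<in> set rs" "1 \<in> set rs" "0 \<in> set cs" "1 \<in> set cs" "n + 1 \<in> set cs"
    "c \<in> set cs" "2 \<le> c" "c < n"
proof -
  obtain R C where M: "M_inf = sample_matrix (staircase_cell n) (nths rs R) (nths cs C)"
    using assms unfolding submatrix_sample_matrix_iff by blast
  have "length (nths rs R) = 2"
    using arg_cong[OF M, of length] by (simp add: M_inf_def sample_matrix_def)
  then obtain a b where ab: "nths rs R = [a, b]"
    by (auto simp: length_Suc_conv numeral_2_eq_2)
  have "length (nths cs C) = 4"
    using arg_cong[OF M, of "\<lambda>M. length (hd M)"] ab by (simp add: M_inf_def sample_matrix_def)
  then obtain c1 c2 c3 c4 where c: "nths cs C = [c1, c2, c3, c4]"
    by (auto simp: length_Suc_conv eval_nat_numeral)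
  have "a < b" "c1 < c2" "c2 < c3" "c3 < c4"
    using sorted_wrt_less_nths[OF rs(1), of R] sorted_wrt_less_nths[OF cs(1), of C] ab c by auto
  moreover have "staircase_cell n a c1" "staircase_cell n b c1"
      "\<not> staircase_cell n a c2" "staircase_cell n b c2"
      "\<not> staircase_cell n a c3" "\<not> staircase_cell n b c3"
      "staircase_cell n a c4" "staircase_cell n b c4"
    using M unfolding ab c by (simp_all add: M_inf_def sample_matrix_def)
  ultimately have "a = 0 \<and> b = 1 \<and> c1 = 0 \<and> c2 = 1 \<and> c4 = n + 1 \<and> 2 \<le> c3 \<and> c3 < n"
    by (rule staircase_M_inf_pattern[OF n])
  moreover have "{a, b} \<subseteq> set rs" "{c1, c2, c3, c4} \<subseteq> set cs"
    using set_nths_subset[of rs R] set_nths_subset[of cs C] ab c by auto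
  ultimately show ?thesis using that by auto
qed

context
  fixes c :: nat
  assumes polyomino: "polyomino (sample_matrix (staircase_cell n) rs cs)"
    and kept: "0 \<in> set rs" "0 \<in> set cs" "1 \<in> set cs" "n + 1 \<in> set cs" "c \<in> set cs" "2 \<le> c" "c < n"
begin

lemma staircase_row_kept:
  assumes "2 \<le> r" "r \<le> n"
  shows "r \<in> set rs"
proof (rule ccontr)
  assume r: "r \<notin> set rs"
  let ?U = "{(i, j). i < r \<and> j \<noteq> 0 \<and> (i, j) \<noteq> (1, 1)}"
  have "\<not> polyomino (sample_matrix (staircase_cell n) rs cs)"
  proof (rule sample_matrix_not_polyomino[OF rs(1) cs(1), where U = ?U and r = 0 and c = "n + 1"
        and r' = 0 and c' = 0])
    fix r0 c1 c2
    assume "r0 \<in> set rs" "c1 \<in> set cs" "c2 \<in> set cs" "staircase_cell n r0 c1" "staircase_cell n r0 c2"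
      "(r0, c1) \<in> ?U" "(r0, c2) \<notin> ?U"
    then have "(min c1 c2 < 1 \<and> 1 < max c1 c2) \<or> (min c1 c2 < c \<and> c < max c1 c2)"
      using rs(2) cs(2) assms kept unfolding staircase_cell_def by auto
    then show "\<exists>c''\<in>set cs. min c1 c2 < c'' \<and> c'' < max c1 c2" using kept by blast
  next
    fix c1 r1 r2
    assume "c1 \<in> set cs" "r1 \<in> set rs" "r2 \<in> set rs" "staircase_cell n r1 c1" "staircase_cell n r2 c1"
      "(r1, c1) \<in> ?U" "(r2, c1) \<notin> ?U"
    moreover from this have "r2 \<noteq> r" using r by auto
    ultimately show "\<exists>r''\<in>set rs. min r1 r2 < r'' \<and> r'' < max r1 r2"
      using rs(2) assms unfolding staircase_cell_def by auto
  qed (use kept assms in \<open>auto simp: staircase_cell_def\<close>)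
  with polyomino show False by contradiction
qed

lemma staircase_column_kept:
  assumes "2 \<le> c'" "c' \<le> n"
  shows "c' \<in> set cs"
proof (rule ccontr)
  assume c': "c' \<notin> set cs"
  let ?U = "{(i, j). c' < j}"
  have "\<not> polyomino (sample_matrix (staircase_cell n) rs cs)"
  proof (rule sample_matrix_not_polyomino[OF rs(1) cs(1), where U = ?U and r = 0 and c = "n + 1"
        and r' = 0 and c' = 0])
    fix r0 c1 c2
    assume "r0 \<in> set rs" "c1 \<in> set cs" "c2 \<in> set cs" "staircase_cell n r0 c1" "staircase_cell n r0 c2"
      "(r0, c1) \<in> ?U" "(r0, c2) \<notin> ?U"
    moreover from this have "c2 \<noteq> c'" using c' by auto
    ultimately have "(min c1 c2 < 1 \<and> 1 < max c1 c2) \<or> (min c1 c2 < c \<and> c < max c1 c2)"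
      using rs(2) cs(2) assms kept unfolding staircase_cell_def by auto
    then show "\<exists>c''\<in>set cs. min c1 c2 < c'' \<and> c'' < max c1 c2" using kept by blast
  qed (use kept assms in \<open>auto simp: staircase_cell_def\<close>)
  with polyomino show False by contradiction
qed

end

end

lemma staircase_minimal:
  assumes n: "3 \<le> n" and Q: "polyomino Q" "submatrix M_inf Q" "submatrix Q (staircase n)"
  shows "Q = staircase n"
proof -
  obtain R C where Q_eq: "Q = sample_matrix (staircase_cell n) (nths [0..<n + 1] R) (nths [0..<n + 2] C)"
    using Q(3) unfolding staircase_def submatrix_sample_matrix_iff by blast
  define rs where "rs = nths [0..<n + 1] R"
  define cs where "cs = nths [0..<n + 2] C"
  have rs: "sorted_wrt (<) rs" "set rs \<subseteq> {..n}"
    using set_nths_subset[of "[0..<n + 1]" R]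
    by (auto simp: rs_def intro: sorted_wrt_less_nths simp del: upt_Suc)
  have cs: "sorted_wrt (<) cs" "set cs \<subseteq> {..n + 1}"
    using set_nths_subset[of "[0..<n + 2]" C]
    by (auto simp: cs_def intro: sorted_wrt_less_nths simp del: upt_Suc)
  note Q = Q[unfolded Q_eq, folded rs_def cs_def]
  obtain c where kept: "0 \<in> set rs" "1 \<in> set rs" "0 \<in> set cs" "1 \<in> set cs" "n + 1 \<in> set cs"
      "c \<in> set cs" "2 \<le> c" "c < n"
    using staircase_M_inf_occurrence[OF n rs cs Q(2)] .
  have "r \<in> set rs" if "r \<le> n" for r
    using kept(1,2) staircase_row_kept[OF n rs cs Q(1) kept(1,3-8)] that
    by (cases "r < 2") (auto simp: numeral_2_eq_2 less_Suc_eq)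
  then have "set rs = set [0..<n + 1]" using rs(2) by (auto simp del: upt_Suc)
  then have rs_full: "rs = [0..<n + 1]" by (rule strict_sorted_equal[OF sorted_wrt_upt rs(1)])
  have "c' \<in> set cs" if "c' \<le> n + 1" for c'
    using kept(3-5) staircase_column_kept[OF n rs cs Q(1) kept(1,3-8)] that
    by (cases "c' < 2"; cases "c' = n + 1") (auto simp: numeral_2_eq_2 less_Suc_eq)
  then have "set cs = set [0..<n + 2]" using cs(2) by (auto simp del: upt_Suc)
  then have cs_full: "cs = [0..<n + 2]" by (rule strict_sorted_equal[OF sorted_wrt_upt cs(1)])
  show ?thesis
    using Q_eq rs_full cs_full by (simp add: rs_def cs_def staircase_def)
qed

lemma staircase_in_p_basis: "3 \<le> n \<Longrightarrow> staircase n \<in> p_basis (Av_P M_inf)"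
  unfolding p_basis_def Av_P_def
  using polyomino_staircase submatrix_M_inf_staircase staircase_minimal by force

lemma inj_staircase: "inj staircase"
  by (rule injI, drule arg_cong[where f = length]) (simp add: staircase_def sample_matrix_def)

theorem proposition10:
  shows "infinite (p_basis (Av_P M_inf))"
proof
  assume "finite (p_basis (Av_P M_inf))"
  moreover have "staircase ` {3..} \<subseteq> p_basis (Av_P M_inf)"
    using staircase_in_p_basis by auto
  ultimately have "finite (staircase ` {3..})" by (rule finite_subset[rotated])
  then show False
    using finite_imageD[OF _ inj_on_subset[OF inj_staircase]] infinite_Ici[of "3 :: nat"] by blast
qed

end
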